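(* Let $Y$ be a real Banach space. Then $L(\ell_1,Y)$ has octahedral norm if and only if $Y$ has octahedral norm.
   Context: The norm of a Banach space $Z$ is octahedral if for every finite-dimensional subspace $E$ and $\varepsilon>0$ there is $y\in S_Z$ with $\|x+\lambda y\|\ge(1-\varepsilon)(\|x\|+|\lambda|)$ for all $x\in E$, scalars $\lambda$. $L(\ell_1,Y)$ is the space of bounded linear operators from $\ell_1$ to $Y$ with the operator norm. *)

theory Defs
  imports "HOL-Analysis.Analysis"
begin

typedef l1 = "{f :: nat \<Rightarrow> real. summable (\<lambda>n. \<bar>f n\<bar>)}"
  morphisms l1_fun Abs_l1
  by (rule exI[of _ "\<lambda>_. 0"]) simp

setup_lifting type_definition_l1

lemma l1_summable_add:
  assumes "summable (\<lambda>n. \<bar>f n\<bar>)" "summable (\<lambda>n. \<bar>g n\<bar>)"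
  shows "summable (\<lambda>n. \<bar>f n + g n\<bar> :: real)"
proof (rule summable_comparison_test[of _ "\<lambda>n. \<bar>f n\<bar> + \<bar>g n\<bar>"])
  show "\<exists>N. \<forall>n\<ge>N. norm \<bar>f n + g n\<bar> \<le> \<bar>f n\<bar> + \<bar>g n\<bar>" by auto
  show "summable (\<lambda>n. \<bar>f n\<bar> + \<bar>g n\<bar>)" using assms by (rule summable_add)
qed

instantiation l1 :: real_vector
begin
lift_definition zero_l1 :: l1 is "\<lambda>_. 0" by simp
lift_definition plus_l1 :: "l1 \<Rightarrow> l1 \<Rightarrow> l1" is "\<lambda>f g n. f n + g n"
  by (rule l1_summable_add)
lift_definition uminus_l1 :: "l1 \<Rightarrow> l1" is "\<lambda>f n. - f n" by simp
lift_definition minus_l1 :: "l1 \<Rightarrow> l1 \<Rightarrow> l1" is "\<lambda>f g n. f n - g n"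
  using l1_summable_add[of _ "\<lambda>n. - _ n"] by simp
lift_definition scaleR_l1 :: "real \<Rightarrow> l1 \<Rightarrow> l1" is "\<lambda>c f n. c * f n"
  by (simp add: abs_mult summable_mult)
instance
  by standard (transfer; auto simp: fun_eq_iff algebra_simps)+
end

instantiation l1 :: real_normed_vector
begin
lift_definition norm_l1 :: "l1 \<Rightarrow> real" is "\<lambda>f. \<Sum>n. \<bar>f n\<bar>" .
definition dist_l1 :: "l1 \<Rightarrow> l1 \<Rightarrow> real" where "dist_l1 x y = norm (x - y)"
definition sgn_l1 :: "l1 \<Rightarrow> l1" where "sgn_l1 x = x /\<^sub>R norm x"
definition uniformity_l1 :: "(l1 \<times> l1) filter" where
  "uniformity_l1 = (INF e\<in>{0<..}. principal {(x, y). dist x y < e})"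
definition open_l1 :: "l1 set \<Rightarrow> bool" where
  "open_l1 U = (\<forall>x\<in>U. eventually (\<lambda>(x', y). x' = x \<longrightarrow> y \<in> U) uniformity)"
instance
proof
  fix x y :: l1 and a :: real
  show "dist x y = norm (x - y)" by (simp add: dist_l1_def)
  show "sgn x = x /\<^sub>R norm x" by (simp add: sgn_l1_def)
  show "uniformity = (INF e\<in>{0<..}. principal {(x, y :: l1). dist x y < e})"
    by (simp add: uniformity_l1_def)
  show "open U = (\<forall>x\<in>U. eventually (\<lambda>(x', y). x' = x \<longrightarrow> y \<in> U) uniformity)"
    for U :: "l1 set" by (simp add: open_l1_def)
  show "(norm x = 0) = (x = 0)"
    by transfer (auto simp: suminf_eq_zero_iff fun_eq_iff)
  show "norm (x + y) \<le> norm x + norm y"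
  proof transfer
    fix f g :: "nat \<Rightarrow> real"
    assume f: "summable (\<lambda>n. \<bar>f n\<bar>)" and g: "summable (\<lambda>n. \<bar>g n\<bar>)"
    have "(\<Sum>n. \<bar>f n + g n\<bar>) \<le> (\<Sum>n. \<bar>f n\<bar> + \<bar>g n\<bar>)"
      by (rule suminf_le) (auto intro: l1_summable_add f g summable_add)
    also have "\<dots> = (\<Sum>n. \<bar>f n\<bar>) + (\<Sum>n. \<bar>g n\<bar>)"
      using f g by (rule suminf_add[symmetric])
    finally show "(\<Sum>n. \<bar>f n + g n\<bar>) \<le> (\<Sum>n. \<bar>f n\<bar>) + (\<Sum>n. \<bar>g n\<bar>)" .
  qed
  show "norm (a *\<^sub>R x) = \<bar>a\<bar> * norm x"
    by transfer (simp add: abs_mult suminf_mult)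
qed
end

definition octahedral_norm :: "'a::real_normed_vector itself \<Rightarrow> bool" where
  "octahedral_norm _ \<longleftrightarrow>
     (\<forall>F :: 'a set. finite F \<longrightarrow> (\<forall>\<epsilon>>0. \<exists>y. norm y = 1 \<and>
        (\<forall>x\<in>span F. \<forall>t::real. norm (x + t *\<^sub>R y) \<ge> (1 - \<epsilon>) * (norm x + \<bar>t\<bar>))))"

end

theory Submission
  imports Defs
begin

text \<open>
  Let Y be a real Banach space and L = L(ell_1, Y).  Both directions rest on two facts
  about the unit vectors e_n of ell_1, proved first: the norm of an operator T on ell_1
  is bounded by any bound for the columns T e_n, and every sequence of unit vectors of Y
  is the sequence of columns of an operator of norm one.

  Y octahedral implies L octahedral: given finitely many operators, apply octahedrality
  of Y to their n-th columns for each n separately, obtaining unit vectors y_n, and take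
  the operator S with columns y_n; the octahedral inequality for S is checked columnwise.

  L octahedral implies Y octahedral: Y embeds into L via x \<mapsto> e_0^* \<otimes> x, which does
  not decrease norms.  A unit operator S that is almost octahedral for the embedded span
  makes its column z = S e_0 satisfy (1-\<delta>)(|x|+|t|) \<le> max(|x+tz|, |t|) on the span;
  this forces |z| \<ge> 1 - 2\<delta>, and a separate lemma shows that then the normalization
  of z is octahedral with constant 1 - 3\<delta>.
\<close>

text \<open>It suffices to verify the octahedral inequality for small \<epsilon>, since it only
  gets weaker as \<epsilon> grows.\<close>

lemma octahedral_normI:
  assumes "\<And>F :: 'a::real_normed_vector set. \<And>\<epsilon>. finite F \<Longrightarrow> 0 < \<epsilon> \<Longrightarrow> \<epsilon> < 1 \<Longrightarrow>
             \<exists>y. norm y = 1 \<and>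
               (\<forall>x\<in>span F. \<forall>t::real. (1 - \<epsilon>) * (norm x + \<bar>t\<bar>) \<le> norm (x + t *\<^sub>R y))"
  shows "octahedral_norm TYPE('a)"
  unfolding octahedral_norm_def
proof (intro allI impI)
  fix F :: "'a set" and \<epsilon> :: real
  assume "finite F" "0 < \<epsilon>"
  then have "0 < min \<epsilon> (1/2)" "min \<epsilon> (1/2) < 1" by auto
  with \<open>finite F\<close> obtain y where y1: "norm y = 1"
    and y: "\<And>x t. x \<in> span F \<Longrightarrow> (1 - min \<epsilon> (1/2)) * (norm x + \<bar>t\<bar>) \<le> norm (x + t *\<^sub>R y)"
    using assms[of F "min \<epsilon> (1/2)"] by blast
  have "(1 - \<epsilon>) * (norm x + \<bar>t\<bar>) \<le> norm (x + t *\<^sub>R y)" if "x \<in> span F" for x t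
  proof -
    have "(1 - \<epsilon>) * (norm x + \<bar>t\<bar>) \<le> (1 - min \<epsilon> (1/2)) * (norm x + \<bar>t\<bar>)"
      by (rule mult_right_mono) auto
    with y[OF that, of t] show ?thesis by linarith
  qed
  with y1 show "\<exists>y. norm y = 1 \<and>
      (\<forall>x\<in>span F. \<forall>t::real. (1 - \<epsilon>) * (norm x + \<bar>t\<bar>) \<le> norm (x + t *\<^sub>R y))"
    by blast
qed

lemma octahedral_normD:
  fixes F :: "'a::real_normed_vector set"
  assumes "octahedral_norm TYPE('a)" "finite F" "0 < \<epsilon>"
  shows "\<exists>y. norm y = 1 \<and>
           (\<forall>x\<in>span F. \<forall>t::real. (1 - \<epsilon>) * (norm x + \<bar>t\<bar>) \<le> norm (x + t *\<^sub>R y))"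
  using assms unfolding octahedral_norm_def by blast

section \<open>Operators on ell_1 and the unit vector basis\<close>

lemma l1_summable: "summable (\<lambda>n. \<bar>l1_fun f n\<bar>)"
  using l1_fun[of f] by simp

lemma abs_l1_coord_le: "\<bar>l1_fun f k\<bar> \<le> norm f"
  using sum_le_suminf[OF l1_summable[of f], of "{k}"] by (simp add: norm_l1.rep_eq)

lift_definition l1_unit :: "nat \<Rightarrow> l1" is "\<lambda>n k. if k = n then 1 else 0"
proof -
  fix n :: nat
  have "(\<lambda>k. \<bar>if k = n then 1 else 0 :: real\<bar>) = (\<lambda>k. if k = n then 1 else 0)" by auto
  then show "summable (\<lambda>k. \<bar>if k = n then 1 else 0 :: real\<bar>)"
    using summable_single[of n "\<lambda>_. 1::real"] by simp
qed

lemma norm_l1_unit: "norm (l1_unit n) = 1"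
proof -
  have "(\<lambda>k. \<bar>if k = n then 1 else 0 :: real\<bar>) = (\<lambda>k. if k = n then 1 else 0)" by auto
  then show ?thesis
    using sums_unique[OF sums_single[of n "\<lambda>_. 1::real"]]
    by (simp add: norm_l1.rep_eq l1_unit.rep_eq)
qed

lift_definition l1_trunc :: "nat \<Rightarrow> l1 \<Rightarrow> l1" is "\<lambda>N f k. if k < N then f k else 0"
proof -
  fix N and f :: "nat \<Rightarrow> real" assume "summable (\<lambda>n. \<bar>f n\<bar>)"
  then show "summable (\<lambda>n. \<bar>if n < N then f n else 0\<bar>)"
    by (rule summable_comparison_test'[where N=0]) auto
qed

lemma l1_trunc_eq_sum: "l1_trunc N f = (\<Sum>n<N. l1_fun f n *\<^sub>R l1_unit n)"
proof (induction N)
  case 0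
  have "l1_trunc 0 f = 0" by transfer auto
  then show ?case by simp
next
  case (Suc N)
  have "l1_trunc (Suc N) f = l1_trunc N f + l1_fun f N *\<^sub>R l1_unit N"
    by transfer (auto simp: fun_eq_iff less_Suc_eq)
  then show ?case using Suc by simp
qed

lemma norm_l1_trunc_diff:
  "norm (l1_trunc N f - f) = (\<Sum>n. \<bar>l1_fun f n\<bar>) - (\<Sum>n<N. \<bar>l1_fun f n\<bar>)"
proof -
  let ?g = "\<lambda>k. \<bar>if k < N then 0 else l1_fun f k\<bar>"
  have "(\<lambda>k. \<bar>l1_fun (l1_trunc N f - f) k\<bar>) = ?g"
    by (auto simp: minus_l1.rep_eq l1_trunc.rep_eq fun_eq_iff)
  then have "norm (l1_trunc N f - f) = suminf ?g"
    by (simp add: norm_l1.rep_eq)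
  also have "\<dots> = (\<Sum>n. ?g (n + N)) + sum ?g {..<N}"
    by (rule suminf_split_initial_segment)
       (rule summable_comparison_test'[where N=0, OF l1_summable[of f]], auto)
  also have "\<dots> = (\<Sum>n. \<bar>l1_fun f (n + N)\<bar>)" by simp
  also have "\<dots> = (\<Sum>n. \<bar>l1_fun f n\<bar>) - (\<Sum>n<N. \<bar>l1_fun f n\<bar>)"
    using suminf_split_initial_segment[OF l1_summable[of f], of N] by simp
  finally show ?thesis .
qed

lemma l1_trunc_tendsto: "(\<lambda>N. l1_trunc N f) \<longlonglongrightarrow> f"
proof -
  have "(\<lambda>N. (\<Sum>n. \<bar>l1_fun f n\<bar>) - (\<Sum>n<N. \<bar>l1_fun f n\<bar>))
          \<longlonglongrightarrow> (\<Sum>n. \<bar>l1_fun f n\<bar>) - (\<Sum>n. \<bar>l1_fun f n\<bar>)"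
    by (intro tendsto_intros summable_LIMSEQ l1_summable)
  then have "(\<lambda>N. norm (l1_trunc N f - f)) \<longlonglongrightarrow> 0"
    unfolding norm_l1_trunc_diff by simp
  then show ?thesis using tendsto_norm_zero_iff LIM_zero_cancel by blast
qed

lemma blinfun_l1_sums:
  fixes T :: "l1 \<Rightarrow>\<^sub>L 'a::real_normed_vector"
  shows "(\<lambda>n. l1_fun f n *\<^sub>R T (l1_unit n)) sums T f"
proof -
  have "(\<lambda>N. T (l1_trunc N f)) \<longlonglongrightarrow> T f"
    by (intro tendsto_intros l1_trunc_tendsto)
  moreover have "T (l1_trunc N f) = (\<Sum>n<N. l1_fun f n *\<^sub>R T (l1_unit n))" for N
    by (simp add: l1_trunc_eq_sum blinfun.sum_right blinfun.scaleR_right)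
  ultimately show ?thesis unfolding sums_def by simp
qed

lemma norm_blinfun_l1_le:
  fixes T :: "l1 \<Rightarrow>\<^sub>L 'a::banach"
  assumes bound: "\<And>n. norm (T (l1_unit n)) \<le> M"
  shows "norm T \<le> M"
proof (rule norm_blinfun_bound)
  show M0: "0 \<le> M" using bound[of 0] norm_ge_zero order_trans by blast
  fix f
  have "norm (T f) = norm (\<Sum>n. l1_fun f n *\<^sub>R T (l1_unit n))"
    using blinfun_l1_sums[of f T] sums_unique by metis
  also have "\<dots> \<le> (\<Sum>n. M * \<bar>l1_fun f n\<bar>)"
  proof (rule norm_suminf_le)
    show "summable (\<lambda>n. M * \<bar>l1_fun f n\<bar>)" by (intro summable_mult l1_summable)
    show "norm (l1_fun f n *\<^sub>R T (l1_unit n)) \<le> M * \<bar>l1_fun f n\<bar>" for n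
      using mult_left_mono[OF bound[of n], of "\<bar>l1_fun f n\<bar>"] by (simp add: mult.commute)
  qed
  also have "\<dots> = M * norm f" by (simp add: norm_l1.rep_eq suminf_mult l1_summable)
  finally show "norm (T f) \<le> M * norm f" .
qed

lemma norm_blinfun_l1_unit_le:
  fixes T :: "l1 \<Rightarrow>\<^sub>L 'a::real_normed_vector"
  shows "norm (T (l1_unit n)) \<le> norm T"
  using norm_blinfun[of T "l1_unit n"] by (simp add: norm_l1_unit)

definition l1_synth :: "(nat \<Rightarrow> 'a::banach) \<Rightarrow> l1 \<Rightarrow> 'a" where
  "l1_synth y f = (\<Sum>n. l1_fun f n *\<^sub>R y n)"

lemma l1_synth_summable:
  assumes "\<And>n. norm (y n) \<le> 1"
  shows "summable (\<lambda>n. norm (l1_fun f n *\<^sub>R y n))"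
proof (rule summable_comparison_test'[where N=0, OF l1_summable[of f]])
  show "norm (norm (l1_fun f n *\<^sub>R y n)) \<le> \<bar>l1_fun f n\<bar>" for n
    using assms[of n] by (simp add: mult_left_le)
qed

lemma bounded_linear_l1_synth:
  assumes y: "\<And>n. norm (y n) \<le> 1"
  shows "bounded_linear (l1_synth y)"
proof (rule bounded_linear_intro[where K=1])
  note summ = l1_synth_summable[OF y, THEN summable_norm_cancel]
  show "l1_synth y (f + g) = l1_synth y f + l1_synth y g" for f g
    unfolding l1_synth_def using summ by (simp add: plus_l1.rep_eq scaleR_add_left suminf_add)
  show "l1_synth y (r *\<^sub>R f) = r *\<^sub>R l1_synth y f" for r f
    unfolding l1_synth_def using summ by (simp add: scaleR_l1.rep_eq suminf_scaleR_right)
  show "norm (l1_synth y f) \<le> norm f * 1" for f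
  proof -
    have "norm (l1_synth y f) \<le> (\<Sum>n. norm (l1_fun f n *\<^sub>R y n))"
      unfolding l1_synth_def by (rule summable_norm[OF l1_synth_summable[OF y]])
    also have "\<dots> \<le> (\<Sum>n. \<bar>l1_fun f n\<bar>)"
      by (rule suminf_le[OF _ l1_synth_summable[OF y] l1_summable])
         (use y in \<open>simp add: mult_left_le\<close>)
    finally show ?thesis by (simp add: norm_l1.rep_eq)
  qed
qed

lemma l1_synth_unit: "l1_synth y (l1_unit m) = y m"
proof -
  have "(\<lambda>n. l1_fun (l1_unit m) n *\<^sub>R y n) = (\<lambda>n. if n = m then y n else 0)"
    by (auto simp: l1_unit.rep_eq fun_eq_iff)
  then show ?thesis
    unfolding l1_synth_def using sums_unique[OF sums_single[of m y]] by simp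
qed

lemma blinfun_l1_prescribed_units:
  fixes y :: "nat \<Rightarrow> 'a::banach"
  assumes y1: "\<And>n. norm (y n) = 1"
  shows "\<exists>S :: l1 \<Rightarrow>\<^sub>L 'a. norm S = 1 \<and> (\<forall>n. blinfun_apply S (l1_unit n) = y n)"
proof (intro exI conjI allI)
  have bl: "bounded_linear (l1_synth y)" using bounded_linear_l1_synth[of y] y1 by simp
  show S_unit: "Blinfun (l1_synth y) (l1_unit n) = y n" for n
    by (simp add: bounded_linear_Blinfun_apply[OF bl] l1_synth_unit)
  show "norm (Blinfun (l1_synth y)) = 1"
  proof (rule antisym)
    show "norm (Blinfun (l1_synth y)) \<le> 1"
      by (rule norm_blinfun_l1_le) (simp add: S_unit y1)
    show "1 \<le> norm (Blinfun (l1_synth y))"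
      using norm_blinfun_l1_unit_le[of "Blinfun (l1_synth y)" 0] by (simp add: S_unit y1)
  qed
qed

section \<open>Octahedrality of Y lifts to L(ell_1, Y)\<close>

lemma octahedral_blinfun_l1:
  assumes oct: "octahedral_norm TYPE('a::banach)"
  shows "octahedral_norm TYPE(l1 \<Rightarrow>\<^sub>L 'a)"
proof (rule octahedral_normI)
  fix F :: "(l1 \<Rightarrow>\<^sub>L 'a) set" and \<epsilon> :: real
  assume fin: "finite F" and "0 < \<epsilon>" "\<epsilon> < 1"
  define ev where "ev n = (\<lambda>T::l1 \<Rightarrow>\<^sub>L 'a. T (l1_unit n))" for n
  have ev_span: "ev n T \<in> span (ev n ` F)" if "T \<in> span F" for n T
  proof -
    have "linear (ev n)"
      unfolding ev_def by (rule linearI) (simp_all add: plus_blinfun.rep_eq scaleR_blinfun.rep_eq)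
    then show ?thesis using that span_linear_image[of "ev n" F] by auto
  qed
  have "\<exists>y. norm y = 1 \<and> (\<forall>x\<in>span (ev n ` F). \<forall>t::real.
                   (1 - \<epsilon>) * (norm x + \<bar>t\<bar>) \<le> norm (x + t *\<^sub>R y))" for n
    using octahedral_normD[OF oct finite_imageI[OF fin] \<open>0 < \<epsilon>\<close>] .
  then obtain y where y1: "\<And>n. norm (y n) = 1"
    and y: "\<And>n x t. x \<in> span (ev n ` F) \<Longrightarrow> (1 - \<epsilon>) * (norm x + \<bar>t\<bar>) \<le> norm (x + t *\<^sub>R y n)"
    by metis
  obtain S :: "l1 \<Rightarrow>\<^sub>L 'a" where S1: "norm S = 1" and Sy: "\<And>n. S (l1_unit n) = y n"
    using blinfun_l1_prescribed_units[of y] y1 by blast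
  have "(1 - \<epsilon>) * (norm T + \<bar>t\<bar>) \<le> norm (T + t *\<^sub>R S)" if T: "T \<in> span F" for T t
  proof -
    text \<open>Apply the octahedral inequality in Y at each coordinate and take the supremum.\<close>
    have abs_factor: "\<bar>1 - \<epsilon>\<bar> = 1 - \<epsilon>" using \<open>\<epsilon> < 1\<close> by simp
    have "norm (((1 - \<epsilon>) *\<^sub>R T) (l1_unit n)) \<le> norm (T + t *\<^sub>R S) - (1 - \<epsilon>) * \<bar>t\<bar>" for n
    proof -
      have "(1 - \<epsilon>) * (norm (ev n T) + \<bar>t\<bar>) \<le> norm (ev n T + t *\<^sub>R y n)"
        by (rule y[OF ev_span[OF T]])
      also have "ev n T + t *\<^sub>R y n = (T + t *\<^sub>R S) (l1_unit n)"
        by (simp add: ev_def plus_blinfun.rep_eq scaleR_blinfun.rep_eq Sy)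
      also have "norm \<dots> \<le> norm (T + t *\<^sub>R S)" by (rule norm_blinfun_l1_unit_le)
      finally show ?thesis
        by (simp add: ev_def scaleR_blinfun.rep_eq abs_factor distrib_left)
    qed
    then have "norm ((1 - \<epsilon>) *\<^sub>R T) \<le> norm (T + t *\<^sub>R S) - (1 - \<epsilon>) * \<bar>t\<bar>"
      by (rule norm_blinfun_l1_le)
    then show ?thesis by (simp add: abs_factor distrib_left)
  qed
  with S1 show "\<exists>S. norm S = 1 \<and>
      (\<forall>T\<in>span F. \<forall>t::real. (1 - \<epsilon>) * (norm T + \<bar>t\<bar>) \<le> norm (T + t *\<^sub>R S))"
    by blast
qed

section \<open>Embedding Y into L(ell_1, Y)\<close>

definition coord0_op :: "'a::real_normed_vector \<Rightarrow> (l1 \<Rightarrow>\<^sub>L 'a)" where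
  "coord0_op x = Blinfun (\<lambda>f. l1_fun f 0 *\<^sub>R x)"

lemma bounded_linear_coord0: "bounded_linear (\<lambda>f. l1_fun f 0 *\<^sub>R x)"
proof (rule bounded_linear_intro[where K="norm x"])
  show "l1_fun (f + g) 0 *\<^sub>R x = l1_fun f 0 *\<^sub>R x + l1_fun g 0 *\<^sub>R x" for f g
    by (simp add: plus_l1.rep_eq scaleR_add_left)
  show "l1_fun (r *\<^sub>R f) 0 *\<^sub>R x = r *\<^sub>R (l1_fun f 0 *\<^sub>R x)" for r f
    by (simp add: scaleR_l1.rep_eq)
  show "norm (l1_fun f 0 *\<^sub>R x) \<le> norm f * norm x" for f
    using abs_l1_coord_le[of f 0] by (simp add: mult_right_mono)
qed

lemma coord0_op_apply: "coord0_op x f = l1_fun f 0 *\<^sub>R x"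
  unfolding coord0_op_def by (simp add: bounded_linear_Blinfun_apply[OF bounded_linear_coord0])

lemma linear_coord0_op: "linear coord0_op"
  by (rule linearI)
     (auto intro!: blinfun_eqI simp: coord0_op_apply plus_blinfun.rep_eq scaleR_blinfun.rep_eq
        scaleR_add_right)

lemma norm_coord0_op_ge: "norm x \<le> norm (coord0_op x)"
  using norm_blinfun_l1_unit_le[of "coord0_op x" 0] by (simp add: coord0_op_apply l1_unit.rep_eq)

text \<open>Perturbing the embedded vector by a multiple of an operator S of norm at most one only
  changes the zeroth column, so the norm is controlled by that column and by |t|.\<close>

lemma norm_coord0_op_add_le:
  fixes S :: "l1 \<Rightarrow>\<^sub>L 'a::banach"
  assumes S: "norm S \<le> 1"
  shows "norm (coord0_op x + t *\<^sub>R S) \<le> max (norm (x + t *\<^sub>R S (l1_unit 0))) \<bar>t\<bar>"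
proof (rule norm_blinfun_l1_le)
  fix n
  show "norm ((coord0_op x + t *\<^sub>R S) (l1_unit n)) \<le> max (norm (x + t *\<^sub>R S (l1_unit 0))) \<bar>t\<bar>"
  proof (cases "n = 0")
    case True
    then show ?thesis
      by (simp add: coord0_op_apply l1_unit.rep_eq plus_blinfun.rep_eq scaleR_blinfun.rep_eq)
  next
    case False
    then have "norm ((coord0_op x + t *\<^sub>R S) (l1_unit n)) = \<bar>t\<bar> * norm (S (l1_unit n))"
      by (simp add: coord0_op_apply l1_unit.rep_eq plus_blinfun.rep_eq scaleR_blinfun.rep_eq)
    also have "\<dots> \<le> \<bar>t\<bar>"
      using norm_blinfun_l1_unit_le[of S n] S by (simp add: mult_left_le)
    finally show ?thesis by simp
  qed
qed

text \<open>A nonzero operator on ell_1 has a nonzero column, so Y has a unit vector.\<close>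

lemma unit_vector_of_blinfun_l1:
  fixes S :: "l1 \<Rightarrow>\<^sub>L 'a::banach"
  assumes "norm S = 1"
  shows "\<exists>w::'a. norm w = 1"
proof -
  have "\<exists>n. S (l1_unit n) \<noteq> 0"
  proof (rule ccontr)
    assume "\<nexists>n. S (l1_unit n) \<noteq> 0"
    then have "norm S \<le> 0" by (intro norm_blinfun_l1_le) simp
    with assms show False by simp
  qed
  then obtain n where "S (l1_unit n) \<noteq> 0" by blast
  then have "norm (sgn (S (l1_unit n))) = 1" by (simp add: norm_sgn)
  then show ?thesis by blast
qed

lemma norm_diff_sgn:
  fixes z :: "'a::real_normed_vector"
  assumes "z \<noteq> 0" "norm z \<le> 1"
  shows "norm (z - sgn z) = 1 - norm z"
proof -
  have "z - sgn z = (norm z - 1) *\<^sub>R sgn z"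
    using assms(1) by (simp add: sgn_div_norm algebra_simps)
  then show ?thesis using assms by (simp add: norm_sgn)
qed

lemma octahedral_estimate_sgn:
  fixes x z :: "'a::real_normed_vector"
  assumes \<delta>: "0 \<le> \<delta>" "\<delta> < 1/2"
    and z: "1 - 2 * \<delta> \<le> norm z" "norm z \<le> 1"
    and est: "(1 - \<delta>) * (norm x + \<bar>t\<bar>) \<le> max (norm (x + t *\<^sub>R z)) \<bar>t\<bar>"
  shows "(1 - 3 * \<delta>) * (norm x + \<bar>t\<bar>) \<le> norm (x + t *\<^sub>R sgn z)"
proof -
  have "z \<noteq> 0" using \<delta> z by auto
  then have sgn1: "norm (sgn z) = 1" by (simp add: norm_sgn)
  consider "(1 - \<delta>) * (norm x + \<bar>t\<bar>) \<le> norm (x + t *\<^sub>R z)"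
    | "(1 - \<delta>) * (norm x + \<bar>t\<bar>) \<le> \<bar>t\<bar>"
    using est by (auto simp: max_def split: if_splits)
  then show ?thesis
  proof cases
    case 1
    have "norm (x + t *\<^sub>R z) \<le> norm (x + t *\<^sub>R sgn z) + norm (t *\<^sub>R (z - sgn z))"
      using norm_triangle_ineq[of "x + t *\<^sub>R sgn z" "t *\<^sub>R (z - sgn z)"]
      by (simp add: algebra_simps)
    also have "norm (t *\<^sub>R (z - sgn z)) = \<bar>t\<bar> * (1 - norm z)"
      using \<open>z \<noteq> 0\<close> z by (simp add: norm_diff_sgn)
    also have "\<dots> \<le> 2 * \<delta> * \<bar>t\<bar>"
      using mult_left_mono[of "1 - norm z" "2 * \<delta>" "\<bar>t\<bar>"] z by (simp add: mult.commute)
    finally have "(1 - \<delta>) * (norm x + \<bar>t\<bar>) - 2 * \<delta> * \<bar>t\<bar> \<le> norm (x + t *\<^sub>R sgn z)"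
      using 1 by linarith
    moreover have "(1 - 3 * \<delta>) * (norm x + \<bar>t\<bar>) \<le> (1 - \<delta>) * (norm x + \<bar>t\<bar>) - 2 * \<delta> * \<bar>t\<bar>"
      using \<delta> by (simp add: algebra_simps)
    ultimately show ?thesis by linarith
  next
    case 2
    have "\<bar>t\<bar> - norm x \<le> norm (x + t *\<^sub>R sgn z)"
      using norm_triangle_ineq2[of "t *\<^sub>R sgn z" "- x"] sgn1 by (simp add: add.commute)
    moreover have "norm x \<le> \<delta> * (norm x + \<bar>t\<bar>)"
      using 2 by (simp add: algebra_simps)
    moreover have "0 \<le> \<delta> * (norm x + \<bar>t\<bar>)" using \<delta> by simp
    moreover have "(1 - 3 * \<delta>) * (norm x + \<bar>t\<bar>) = norm x + \<bar>t\<bar> - 3 * (\<delta> * (norm x + \<bar>t\<bar>))"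
      by (simp add: algebra_simps)
    ultimately show ?thesis by linarith
  qed
qed

section \<open>Octahedrality of L(ell_1, Y) descends to Y\<close>

lemma octahedral_of_blinfun_l1:
  assumes oct: "octahedral_norm TYPE(l1 \<Rightarrow>\<^sub>L 'a::banach)"
  shows "octahedral_norm TYPE('a)"
proof (rule octahedral_normI)
  fix F :: "'a set" and \<epsilon> :: real
  assume fin: "finite F" and "0 < \<epsilon>" "\<epsilon> < 1"
  define \<delta> where "\<delta> = \<epsilon> / 3"
  have \<delta>: "0 < \<delta>" "\<delta> < 1/2" using \<open>0 < \<epsilon>\<close> \<open>\<epsilon> < 1\<close> by (auto simp: \<delta>_def)
  text \<open>A unit vector w is added to F to force the column z below to be almost of norm one.\<close>
  obtain w :: 'a where w: "norm w = 1"
    using octahedral_normD[OF oct, of "{}" 1] unit_vector_of_blinfun_l1 by auto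
  obtain S :: "l1 \<Rightarrow>\<^sub>L 'a" where S1: "norm S = 1"
    and S: "\<And>X t. X \<in> span (coord0_op ` insert w F) \<Longrightarrow>
              (1 - \<delta>) * (norm X + \<bar>t\<bar>) \<le> norm (X + t *\<^sub>R S)"
    using octahedral_normD[OF oct _ \<open>0 < \<delta>\<close>, of "coord0_op ` insert w F"] fin by auto
  define z where "z = S (l1_unit 0)"
  have z1: "norm z \<le> 1" using norm_blinfun_l1_unit_le[of S 0] S1 by (simp add: z_def)
  have est: "(1 - \<delta>) * (norm x + \<bar>t\<bar>) \<le> max (norm (x + t *\<^sub>R z)) \<bar>t\<bar>"
    if "x \<in> span (insert w F)" for x t
  proof -
    have "coord0_op x \<in> span (coord0_op ` insert w F)"
      using that span_linear_image[OF linear_coord0_op, of "insert w F"] by auto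
    then have "(1 - \<delta>) * (norm (coord0_op x) + \<bar>t\<bar>) \<le> norm (coord0_op x + t *\<^sub>R S)"
      by (rule S)
    moreover have "(1 - \<delta>) * (norm x + \<bar>t\<bar>) \<le> (1 - \<delta>) * (norm (coord0_op x) + \<bar>t\<bar>)"
      using norm_coord0_op_ge[of x] \<delta> by (intro mult_left_mono) auto
    ultimately show ?thesis
      using norm_coord0_op_add_le[of S x t] S1 by (simp add: z_def)
  qed
  have z_large: "1 - 2 * \<delta> \<le> norm z"
  proof -
    have "(1 - \<delta>) * (norm w + \<bar>1\<bar>) \<le> max (norm (w + 1 *\<^sub>R z)) \<bar>1\<bar>"
      by (rule est) (simp add: span_base)
    then have "2 - 2 * \<delta> \<le> norm (w + z)" using w \<delta> by (auto simp: max_def split: if_splits)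
    moreover have "norm (w + z) \<le> 1 + norm z" using norm_triangle_ineq[of w z] w by simp
    ultimately show ?thesis by simp
  qed
  have "z \<noteq> 0" using z_large \<delta> by auto
  show "\<exists>y. norm y = 1 \<and>
      (\<forall>x\<in>span F. \<forall>t::real. (1 - \<epsilon>) * (norm x + \<bar>t\<bar>) \<le> norm (x + t *\<^sub>R y))"
  proof (intro exI conjI ballI allI)
    show "norm (sgn z) = 1" using \<open>z \<noteq> 0\<close> by (simp add: norm_sgn)
    fix x t assume "x \<in> span F"
    then have "x \<in> span (insert w F)" by (meson span_mono subset_insertI subsetD)
    from octahedral_estimate_sgn[OF _ _ z_large z1 est[OF this]] \<delta>
    show "(1 - \<epsilon>) * (norm x + \<bar>t\<bar>) \<le> norm (x + t *\<^sub>R sgn z)"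
      by (simp add: \<delta>_def)
  qed
qed

theorem mainTheorem15:
  shows "octahedral_norm TYPE(l1 \<Rightarrow>\<^sub>L 'a::banach) \<longleftrightarrow> octahedral_norm TYPE('a)"
  using octahedral_of_blinfun_l1 octahedral_blinfun_l1 by blast

end
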